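(* Let $\mathbf B$ be a partial residuated Boolean algebra and let $a,b\in B$ with $a\not\leq b$. Then there exists a prime filter $F$ of $\mathbf B$ such that $a\in F$ and $b\notin F$.
   Context: A residuated Boolean algebra is a Boolean algebra $(A,\vee,\wedge,\neg,\top,\bot,\leq)$ with a binary operation $\otimes$ having unit $1$ and operations $\backslash,/$ with $a\otimes b\leq c$ iff $b\leq a\backslash c$ iff $a\leq c/b$. A partial structure $\mathbf B=(B,\otimes,\backslash,/,\vee,\wedge,\neg,1,\top,\bot,\leq)$ has partial operations on $B$ (write $x\star y=\infty$ if undefined), constants in $B$ and a relation $\leq$. An embedding into a total residuated Boolean algebra is an injection preserving constants, commuting with operations wherever defined, and satisfying $x\leq y\iff\iota(x)\leq\iota(y)$. $\mathbf B$ is a partial residuated Boolean algebra if it embeds into some residuated Boolean algebra and for every $a\in B$, $\neg a$ is defined, $a\vee\neg a=\top$ and $a\wedge\neg a=\bot$. A prime filter of $\mathbf B$ is $F\subseteq B$, $F\neq B$, such that: $a\in F$, $a\leq b$ imply $b\in F$; $a,b\in F$ and $a\wedge b\neq\infty$ imply $a\wedge b\in F$; and $\neg a\in F$ iff $a\notin F$ for all $a\in B$. *)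

theory Defs
  imports Main
begin

record 'b rba =
  rcarrier :: "'b set"
  rmult :: "'b \<Rightarrow> 'b \<Rightarrow> 'b"
  rldiv :: "'b \<Rightarrow> 'b \<Rightarrow> 'b"
  rrdiv :: "'b \<Rightarrow> 'b \<Rightarrow> 'b"
  rjoin :: "'b \<Rightarrow> 'b \<Rightarrow> 'b"
  rmeet :: "'b \<Rightarrow> 'b \<Rightarrow> 'b"
  rneg :: "'b \<Rightarrow> 'b"
  rone :: 'b
  rtop :: 'b
  rbot :: 'b
  rle :: "'b \<Rightarrow> 'b \<Rightarrow> bool"

text \<open>A Boolean algebra (carrier, join, meet, neg, top, bot, le) with a binary operation
  mult having unit one and residuals ldiv (written a\b) and rdiv (written c/b):
  mult a b \<le> c iff b \<le> ldiv a c iff a \<le> rdiv c b.\<close>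
definition is_rba :: "'b rba \<Rightarrow> bool" where
  "is_rba A \<longleftrightarrow>
     (let C = rcarrier A; le = rle A in
      rone A \<in> C \<and> rtop A \<in> C \<and> rbot A \<in> C \<and>
      (\<forall>x\<in>C. \<forall>y\<in>C. rmult A x y \<in> C \<and> rldiv A x y \<in> C \<and> rrdiv A x y \<in> C \<and>
                     rjoin A x y \<in> C \<and> rmeet A x y \<in> C) \<and>
      (\<forall>x\<in>C. rneg A x \<in> C) \<and>
      \<comment> \<open>partial order\<close>
      (\<forall>x\<in>C. le x x) \<and>
      (\<forall>x\<in>C. \<forall>y\<in>C. le x y \<and> le y x \<longrightarrow> x = y) \<and>
      (\<forall>x\<in>C. \<forall>y\<in>C. \<forall>z\<in>C. le x y \<and> le y z \<longrightarrow> le x z) \<and>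
      \<comment> \<open>join is least upper bound, meet is greatest lower bound\<close>
      (\<forall>x\<in>C. \<forall>y\<in>C. \<forall>z\<in>C. le (rjoin A x y) z \<longleftrightarrow> le x z \<and> le y z) \<and>
      (\<forall>x\<in>C. \<forall>y\<in>C. \<forall>z\<in>C. le z (rmeet A x y) \<longleftrightarrow> le z x \<and> le z y) \<and>
      \<comment> \<open>bounds\<close>
      (\<forall>x\<in>C. le (rbot A) x \<and> le x (rtop A)) \<and>
      \<comment> \<open>distributivity\<close>
      (\<forall>x\<in>C. \<forall>y\<in>C. \<forall>z\<in>C.
          rmeet A x (rjoin A y z) = rjoin A (rmeet A x y) (rmeet A x z)) \<and>
      \<comment> \<open>complement\<close>
      (\<forall>x\<in>C. rjoin A x (rneg A x) = rtop A \<and> rmeet A x (rneg A x) = rbot A) \<and>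
      \<comment> \<open>unit\<close>
      (\<forall>x\<in>C. rmult A (rone A) x = x \<and> rmult A x (rone A) = x) \<and>
      \<comment> \<open>residuation\<close>
      (\<forall>a\<in>C. \<forall>b\<in>C. \<forall>c\<in>C.
          (le (rmult A a b) c \<longleftrightarrow> le b (rldiv A a c)) \<and>
          (le b (rldiv A a c) \<longleftrightarrow> le a (rrdiv A c b))))"

text \<open>Partial operations return None when undefined (x \<star> y = \<infinity>).\<close>
record 'a pstruct =
  pcarrier :: "'a set"
  pmult :: "'a \<Rightarrow> 'a \<Rightarrow> 'a option"
  pldiv :: "'a \<Rightarrow> 'a \<Rightarrow> 'a option"
  prdiv :: "'a \<Rightarrow> 'a \<Rightarrow> 'a option"
  pjoin :: "'a \<Rightarrow> 'a \<Rightarrow> 'a option"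
  pmeet :: "'a \<Rightarrow> 'a \<Rightarrow> 'a option"
  pneg :: "'a \<Rightarrow> 'a option"
  pone :: 'a
  ptop :: 'a
  pbot :: 'a
  ple :: "'a \<Rightarrow> 'a \<Rightarrow> bool"

definition binop_closed :: "'a set \<Rightarrow> ('a \<Rightarrow> 'a \<Rightarrow> 'a option) \<Rightarrow> bool" where
  "binop_closed B f \<longleftrightarrow> (\<forall>x\<in>B. \<forall>y\<in>B. \<forall>z. f x y = Some z \<longrightarrow> z \<in> B)"

definition pstruct_wf :: "'a pstruct \<Rightarrow> bool" where
  "pstruct_wf P \<longleftrightarrow>
     (let B = pcarrier P in
      pone P \<in> B \<and> ptop P \<in> B \<and> pbot P \<in> B \<and>
      binop_closed B (pmult P) \<and> binop_closed B (pldiv P) \<and> binop_closed B (prdiv P) \<and>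
      binop_closed B (pjoin P) \<and> binop_closed B (pmeet P) \<and>
      (\<forall>x\<in>B. \<forall>z. pneg P x = Some z \<longrightarrow> z \<in> B))"

definition hom_binop :: "'a set \<Rightarrow> ('a \<Rightarrow> 'b) \<Rightarrow> ('a \<Rightarrow> 'a \<Rightarrow> 'a option)
    \<Rightarrow> ('b \<Rightarrow> 'b \<Rightarrow> 'b) \<Rightarrow> bool" where
  "hom_binop B \<iota> f g \<longleftrightarrow> (\<forall>x\<in>B. \<forall>y\<in>B. \<forall>z. f x y = Some z \<longrightarrow> \<iota> z = g (\<iota> x) (\<iota> y))"

definition embedding :: "'a pstruct \<Rightarrow> 'b rba \<Rightarrow> ('a \<Rightarrow> 'b) \<Rightarrow> bool" where
  "embedding P A \<iota> \<longleftrightarrow>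
     inj_on \<iota> (pcarrier P) \<and> \<iota> ` pcarrier P \<subseteq> rcarrier A \<and>
     \<iota> (pone P) = rone A \<and> \<iota> (ptop P) = rtop A \<and> \<iota> (pbot P) = rbot A \<and>
     hom_binop (pcarrier P) \<iota> (pmult P) (rmult A) \<and>
     hom_binop (pcarrier P) \<iota> (pldiv P) (rldiv A) \<and>
     hom_binop (pcarrier P) \<iota> (prdiv P) (rrdiv A) \<and>
     hom_binop (pcarrier P) \<iota> (pjoin P) (rjoin A) \<and>
     hom_binop (pcarrier P) \<iota> (pmeet P) (rmeet A) \<and>
     (\<forall>x\<in>pcarrier P. \<forall>z. pneg P x = Some z \<longrightarrow> \<iota> z = rneg A (\<iota> x)) \<and>
     (\<forall>x\<in>pcarrier P. \<forall>y\<in>pcarrier P. ple P x y \<longleftrightarrow> rle A (\<iota> x) (\<iota> y))"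

text \<open>P is a partial residuated Boolean algebra, witnessed by an embedding \<iota> into the
  residuated Boolean algebra A.  (The existential over A and its carrier type is expressed
  by universally quantifying over A, \<iota> and the type 'b in the hypotheses of theorems.)\<close>
definition partial_rba_via :: "'a pstruct \<Rightarrow> 'b rba \<Rightarrow> ('a \<Rightarrow> 'b) \<Rightarrow> bool" where
  "partial_rba_via P A \<iota> \<longleftrightarrow>
     pstruct_wf P \<and> is_rba A \<and> embedding P A \<iota> \<and>
     (\<forall>a\<in>pcarrier P. pneg P a \<noteq> None \<and>
        pjoin P a (the (pneg P a)) = Some (ptop P) \<and>
        pmeet P a (the (pneg P a)) = Some (pbot P))"

definition prime_filter :: "'a pstruct \<Rightarrow> 'a set \<Rightarrow> bool" where
  "prime_filter P F \<longleftrightarrow>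
     F \<subseteq> pcarrier P \<and> F \<noteq> pcarrier P \<and>
     (\<forall>a\<in>F. \<forall>b\<in>pcarrier P. ple P a b \<longrightarrow> b \<in> F) \<and>
     (\<forall>a\<in>F. \<forall>b\<in>F. \<forall>c. pmeet P a b = Some c \<longrightarrow> c \<in> F) \<and>
     (\<forall>a\<in>pcarrier P. \<forall>c. pneg P a = Some c \<longrightarrow> (c \<in> F \<longleftrightarrow> a \<notin> F))"

end

theory Submission
  imports Defs
begin

text \<open>Because the embedding \<iota> reflects the order, \<open>a \<le> b\<close> fails exactly when
  \<open>\<iota> a \<sqinter> \<not> \<iota> b \<noteq> \<bottom>\<close> in the total algebra A. By Zorn's lemma the principal filter of this element
  extends to an ultrafilter M of the Boolean reduct of A, and the preimage of M under \<iota> is the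
  required prime filter: \<iota> reflects the order and preserves each meet and negation that is
  defined in B, and \<open>\<bottom> \<notin> M\<close> makes the preimage proper.\<close>

locale boolean_algebra_on =
  fixes C :: "'b set"
    and le :: "'b \<Rightarrow> 'b \<Rightarrow> bool" (infix "\<sqsubseteq>" 50)
    and join :: "'b \<Rightarrow> 'b \<Rightarrow> 'b" (infixl "\<squnion>" 65)
    and meet :: "'b \<Rightarrow> 'b \<Rightarrow> 'b" (infixl "\<sqinter>" 70)
    and neg :: "'b \<Rightarrow> 'b"
    and top :: 'b
    and bot :: 'b
  assumes top_closed: "top \<in> C"
    and bot_closed: "bot \<in> C"
    and join_closed: "\<lbrakk>x \<in> C; y \<in> C\<rbrakk> \<Longrightarrow> x \<squnion> y \<in> C"
    and meet_closed: "\<lbrakk>x \<in> C; y \<in> C\<rbrakk> \<Longrightarrow> x \<sqinter> y \<in> C"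
    and neg_closed: "x \<in> C \<Longrightarrow> neg x \<in> C"
    and refl: "x \<in> C \<Longrightarrow> x \<sqsubseteq> x"
    and antisym: "\<lbrakk>x \<in> C; y \<in> C; x \<sqsubseteq> y; y \<sqsubseteq> x\<rbrakk> \<Longrightarrow> x = y"
    and trans: "\<lbrakk>x \<in> C; y \<in> C; z \<in> C; x \<sqsubseteq> y; y \<sqsubseteq> z\<rbrakk> \<Longrightarrow> x \<sqsubseteq> z"
    and join_le_iff: "\<lbrakk>x \<in> C; y \<in> C; z \<in> C\<rbrakk> \<Longrightarrow> x \<squnion> y \<sqsubseteq> z \<longleftrightarrow> x \<sqsubseteq> z \<and> y \<sqsubseteq> z"
    and le_meet_iff: "\<lbrakk>x \<in> C; y \<in> C; z \<in> C\<rbrakk> \<Longrightarrow> z \<sqsubseteq> x \<sqinter> y \<longleftrightarrow> z \<sqsubseteq> x \<and> z \<sqsubseteq> y"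
    and bot_le: "x \<in> C \<Longrightarrow> bot \<sqsubseteq> x"
    and le_top: "x \<in> C \<Longrightarrow> x \<sqsubseteq> top"
    and meet_join_distrib: "\<lbrakk>x \<in> C; y \<in> C; z \<in> C\<rbrakk> \<Longrightarrow> x \<sqinter> (y \<squnion> z) = x \<sqinter> y \<squnion> x \<sqinter> z"
    and join_neg: "x \<in> C \<Longrightarrow> x \<squnion> neg x = top"
    and meet_neg: "x \<in> C \<Longrightarrow> x \<sqinter> neg x = bot"
begin

lemma meet_le1: "\<lbrakk>x \<in> C; y \<in> C\<rbrakk> \<Longrightarrow> x \<sqinter> y \<sqsubseteq> x"
  using le_meet_iff[of x y "x \<sqinter> y"] by (simp add: meet_closed refl)

lemma meet_le2: "\<lbrakk>x \<in> C; y \<in> C\<rbrakk> \<Longrightarrow> x \<sqinter> y \<sqsubseteq> y"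
  using le_meet_iff[of x y "x \<sqinter> y"] by (simp add: meet_closed refl)

lemma meet_mono:
  assumes "x \<in> C" "y \<in> C" "z \<in> C" "x \<sqsubseteq> y"
  shows "x \<sqinter> z \<sqsubseteq> y \<sqinter> z"
  using assms meet_le1[of x z] meet_le2[of x z]
  by (simp add: le_meet_iff meet_closed trans[of "x \<sqinter> z" x y])

lemma le_by_cases:
  assumes x: "x \<in> C" and y: "y \<in> C" and z: "z \<in> C"
    and pos: "x \<sqinter> y \<sqsubseteq> z" and neg: "x \<sqinter> neg y \<sqsubseteq> z"
  shows "x \<sqsubseteq> z"
proof -
  have ny: "neg y \<in> C"
    using y by (rule neg_closed)
  have "x \<sqsubseteq> x \<sqinter> top"
    using x by (simp add: le_meet_iff top_closed refl le_top)
  also have "x \<sqinter> top = x \<sqinter> y \<squnion> x \<sqinter> neg y"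
    using meet_join_distrib[OF x y ny] join_neg[OF y] by simp
  finally have "x \<sqsubseteq> x \<sqinter> y \<squnion> x \<sqinter> neg y" .
  moreover have "x \<sqinter> y \<squnion> x \<sqinter> neg y \<sqsubseteq> z"
    using x y ny z pos neg by (simp add: join_le_iff meet_closed)
  ultimately show ?thesis
    using x y ny z by (meson trans join_closed meet_closed)
qed

lemma le_neg_if_meet_le_bot:
  assumes x: "x \<in> C" and y: "y \<in> C" and "x \<sqinter> y \<sqsubseteq> bot"
  shows "x \<sqsubseteq> neg y"
proof (rule le_by_cases[OF x y neg_closed[OF y]])
  show "x \<sqinter> y \<sqsubseteq> neg y"
    using assms bot_le[of "neg y"] trans[of "x \<sqinter> y" bot "neg y"]
    by (simp add: meet_closed bot_closed neg_closed)
  show "x \<sqinter> neg y \<sqsubseteq> neg y"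
    using x y by (simp add: meet_le2 neg_closed)
qed

lemma le_if_meet_neg_le_bot:
  assumes x: "x \<in> C" and y: "y \<in> C" and "x \<sqinter> neg y \<sqsubseteq> bot"
  shows "x \<sqsubseteq> y"
proof (rule le_by_cases[OF x y y])
  show "x \<sqinter> y \<sqsubseteq> y"
    using x y by (simp add: meet_le2)
  show "x \<sqinter> neg y \<sqsubseteq> y"
    using assms bot_le[of y] trans[of "x \<sqinter> neg y" bot y]
    by (simp add: meet_closed bot_closed neg_closed)
qed

definition proper_filter :: "'b set \<Rightarrow> bool" where
  "proper_filter F \<longleftrightarrow> F \<subseteq> C \<and> top \<in> F \<and> bot \<notin> F \<and>
     (\<forall>x\<in>F. \<forall>y\<in>C. x \<sqsubseteq> y \<longrightarrow> y \<in> F) \<and> (\<forall>x\<in>F. \<forall>y\<in>F. x \<sqinter> y \<in> F)"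

lemma proper_filterD:
  assumes "proper_filter F"
  shows "F \<subseteq> C" "top \<in> F" "bot \<notin> F"
    and "\<lbrakk>x \<in> F; y \<in> C; x \<sqsubseteq> y\<rbrakk> \<Longrightarrow> y \<in> F"
    and "\<lbrakk>x \<in> F; y \<in> F\<rbrakk> \<Longrightarrow> x \<sqinter> y \<in> F"
  using assms unfolding proper_filter_def by blast+

definition ultrafilter :: "'b set \<Rightarrow> bool" where
  "ultrafilter M \<longleftrightarrow> proper_filter M \<and> (\<forall>x\<in>C. x \<in> M \<or> neg x \<in> M)"

lemma ultrafilter_imp_proper_filter: "ultrafilter M \<Longrightarrow> proper_filter M"
  unfolding ultrafilter_def by blast

lemma ultrafilter_neg_iff:
  assumes "ultrafilter M" "x \<in> C"
  shows "neg x \<in> M \<longleftrightarrow> x \<notin> M"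
  using assms meet_neg[of x] unfolding ultrafilter_def proper_filter_def by metis

lemma proper_filter_principal:
  assumes c: "c \<in> C" and "\<not> c \<sqsubseteq> bot"
  shows "proper_filter {x \<in> C. c \<sqsubseteq> x}"
  unfolding proper_filter_def
proof (intro conjI ballI impI)
  show "y \<in> {x \<in> C. c \<sqsubseteq> x}" if "x \<in> {x \<in> C. c \<sqsubseteq> x}" "y \<in> C" "x \<sqsubseteq> y" for x y
    using that c trans[of c x y] by blast
qed (use assms in \<open>auto simp: top_closed le_top meet_closed le_meet_iff\<close>)

lemma proper_filter_Union_chain:
  assumes filters: "\<And>F. F \<in> Ch \<Longrightarrow> proper_filter F" and "chain\<^sub>\<subseteq> Ch" and "Ch \<noteq> {}"
  shows "proper_filter (\<Union>Ch)"
  unfolding proper_filter_def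
proof (intro conjI ballI impI)
  show "\<Union>Ch \<subseteq> C" "top \<in> \<Union>Ch" "bot \<notin> \<Union>Ch"
    using filters proper_filterD(1-3) \<open>Ch \<noteq> {}\<close> by blast+
  show "y \<in> \<Union>Ch" if "x \<in> \<Union>Ch" "y \<in> C" "x \<sqsubseteq> y" for x y
    using that filters proper_filterD(4) by blast
  show "x \<sqinter> y \<in> \<Union>Ch" if xy: "x \<in> \<Union>Ch" "y \<in> \<Union>Ch" for x y
  proof -
    obtain X Y where XY: "X \<in> Ch" "Y \<in> Ch" "x \<in> X" "y \<in> Y"
      using xy by blast
    then have "X \<subseteq> Y \<or> Y \<subseteq> X"
      using \<open>chain\<^sub>\<subseteq> Ch\<close> unfolding chain_subset_def by blast
    then show ?thesis
      using XY filters proper_filterD(5) by blast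
  qed
qed

lemma proper_filter_extend:
  assumes M: "proper_filter M" and x: "x \<in> C" and nx: "neg x \<notin> M"
  shows "proper_filter {y \<in> C. \<exists>m\<in>M. m \<sqinter> x \<sqsubseteq> y}" (is "proper_filter ?G")
  unfolding proper_filter_def
proof (intro conjI ballI impI)
  note MC = proper_filterD(1)[OF M]
  show "top \<in> ?G"
    using proper_filterD(2)[OF M] x le_top[OF meet_closed[OF top_closed x]] top_closed by blast
  show "bot \<notin> ?G"
    using MC proper_filterD(4)[OF M] nx x le_neg_if_meet_le_bot by (blast intro: neg_closed)
  show "z \<in> ?G" if "u \<in> ?G" "z \<in> C" "u \<sqsubseteq> z" for u z
    using that MC x by (blast intro: trans meet_closed)
  show "u \<sqinter> v \<in> ?G" if uv: "u \<in> ?G" "v \<in> ?G" for u v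
  proof -
    from uv(1) obtain m where u: "u \<in> C" "m \<in> M" "m \<sqinter> x \<sqsubseteq> u"
      by blast
    from uv(2) obtain n where v: "v \<in> C" "n \<in> M" "n \<sqinter> x \<sqsubseteq> v"
      by blast
    have mn: "m \<in> C" "n \<in> C"
      using u v MC by blast+
    then have mnx: "m \<sqinter> n \<sqinter> x \<in> C"
      using x by (simp add: meet_closed)
    have "m \<sqinter> n \<sqinter> x \<sqsubseteq> m \<sqinter> x" "m \<sqinter> n \<sqinter> x \<sqsubseteq> n \<sqinter> x"
      using mn x by (auto intro!: meet_mono meet_le1 meet_le2 meet_closed)
    then have "m \<sqinter> n \<sqinter> x \<sqsubseteq> u" "m \<sqinter> n \<sqinter> x \<sqsubseteq> v"
      using u v mn x mnx by (meson trans meet_closed)+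
    then have "m \<sqinter> n \<sqinter> x \<sqsubseteq> u \<sqinter> v"
      using u v mnx by (simp add: le_meet_iff)
    moreover have "m \<sqinter> n \<in> M"
      using u v proper_filterD(5)[OF M] by blast
    ultimately show ?thesis
      using u v meet_closed by blast
  qed
qed blast

lemma maximal_proper_filter_ultrafilter:
  assumes M: "proper_filter M" and max: "\<And>G. \<lbrakk>proper_filter G; M \<subseteq> G\<rbrakk> \<Longrightarrow> G = M"
  shows "ultrafilter M"
  unfolding ultrafilter_def
proof (intro conjI ballI M)
  fix x assume x: "x \<in> C"
  show "x \<in> M \<or> neg x \<in> M"
  proof (rule disjCI)
    let ?G = "{y \<in> C. \<exists>m\<in>M. m \<sqinter> x \<sqsubseteq> y}"
    assume "neg x \<notin> M"
    with M x have "proper_filter ?G"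
      by (rule proper_filter_extend)
    moreover have "M \<subseteq> ?G"
      using proper_filterD(1)[OF M] x by (blast intro: meet_le1)
    moreover have "x \<in> ?G"
      using proper_filterD(1,2)[OF M] x top_closed by (blast intro: meet_le2)
    ultimately show "x \<in> M"
      using max by blast
  qed
qed

lemma ultrafilter_exists:
  assumes "c \<in> C" "\<not> c \<sqsubseteq> bot"
  obtains M where "ultrafilter M" "c \<in> M"
proof -
  let ?S = "{F. proper_filter F \<and> c \<in> F}"
  have "\<exists>U\<in>?S. \<forall>X\<in>Ch. X \<subseteq> U" if "Ch \<in> chains ?S" for Ch
  proof (cases "Ch = {}")
    case True
    then show ?thesis
      using assms proper_filter_principal by (auto intro: refl)
  next
    case False
    then have "\<Union>Ch \<in> ?S"
      using that proper_filter_Union_chain[of Ch] unfolding chains_def by blast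
    then show ?thesis by blast
  qed
  then obtain M where "M \<in> ?S" and "\<forall>X\<in>?S. M \<subseteq> X \<longrightarrow> X = M"
    using Zorn_Lemma2[of ?S] by blast
  then show ?thesis
    using maximal_proper_filter_ultrafilter that by blast
qed

lemma ultrafilter_separates:
  assumes x: "x \<in> C" and y: "y \<in> C" and "\<not> x \<sqsubseteq> y"
  obtains M where "ultrafilter M" "x \<in> M" "y \<notin> M"
proof -
  have "x \<sqinter> neg y \<in> C"
    using x y by (simp add: meet_closed neg_closed)
  moreover have "\<not> x \<sqinter> neg y \<sqsubseteq> bot"
    using assms le_if_meet_neg_le_bot by blast
  ultimately obtain M where M: "ultrafilter M" and "x \<sqinter> neg y \<in> M"
    by (rule ultrafilter_exists)
  then have "x \<in> M" "neg y \<in> M"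
    using proper_filterD(4)[OF ultrafilter_imp_proper_filter[OF M]] x y
    by (meson meet_le1 meet_le2 neg_closed)+
  then show ?thesis
    using that M y ultrafilter_neg_iff by blast
qed

end

locale residuated_boolean_algebra =
  fixes A :: "'b rba"
  assumes is_rba: "is_rba A"

sublocale residuated_boolean_algebra \<subseteq>
  boolean_algebra_on "rcarrier A" "rle A" "rjoin A" "rmeet A" "rneg A" "rtop A" "rbot A"
  using is_rba unfolding is_rba_def Let_def boolean_algebra_on_def
  by (elim conjE) (intro conjI allI impI; metis)

lemma embeddingD:
  assumes "embedding P A \<iota>"
  shows "x \<in> pcarrier P \<Longrightarrow> \<iota> x \<in> rcarrier A"
    and "\<lbrakk>x \<in> pcarrier P; y \<in> pcarrier P\<rbrakk> \<Longrightarrow> ple P x y \<longleftrightarrow> rle A (\<iota> x) (\<iota> y)"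
    and "\<lbrakk>x \<in> pcarrier P; y \<in> pcarrier P; pmeet P x y = Some z\<rbrakk> \<Longrightarrow> \<iota> z = rmeet A (\<iota> x) (\<iota> y)"
    and "\<lbrakk>x \<in> pcarrier P; pneg P x = Some z\<rbrakk> \<Longrightarrow> \<iota> z = rneg A (\<iota> x)"
    and "\<iota> (pbot P) = rbot A"
  using assms unfolding embedding_def hom_binop_def image_subset_iff by blast+

lemma pstruct_wfD:
  assumes "pstruct_wf P"
  shows "pbot P \<in> pcarrier P"
    and "\<lbrakk>x \<in> pcarrier P; y \<in> pcarrier P; pmeet P x y = Some z\<rbrakk> \<Longrightarrow> z \<in> pcarrier P"
    and "\<lbrakk>x \<in> pcarrier P; pneg P x = Some z\<rbrakk> \<Longrightarrow> z \<in> pcarrier P"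
  using assms unfolding pstruct_wf_def binop_closed_def Let_def by blast+

lemma (in residuated_boolean_algebra) prime_filter_vimage_ultrafilter:
  assumes wf: "pstruct_wf P" and emb: "embedding P A \<iota>" and M: "ultrafilter M"
  shows "prime_filter P {x \<in> pcarrier P. \<iota> x \<in> M}" (is "prime_filter P ?F")
  unfolding prime_filter_def
proof (intro conjI ballI allI impI)
  note MF = ultrafilter_imp_proper_filter[OF M]
  show "?F \<subseteq> pcarrier P"
    by blast
  have "pbot P \<notin> ?F"
    using embeddingD(5)[OF emb] proper_filterD(3)[OF MF] by simp
  then show "?F \<noteq> pcarrier P"
    using pstruct_wfD(1)[OF wf] by blast
  show "y \<in> ?F" if x: "x \<in> ?F" and y: "y \<in> pcarrier P" and "ple P x y" for x y
  proof -
    have "rle A (\<iota> x) (\<iota> y)"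
      using x y \<open>ple P x y\<close> embeddingD(2)[OF emb] by simp
    then show ?thesis
      using x y embeddingD(1)[OF emb] proper_filterD(4)[OF MF, of "\<iota> x" "\<iota> y"] by simp
  qed
  show "z \<in> ?F" if x: "x \<in> ?F" and y: "y \<in> ?F" and z: "pmeet P x y = Some z" for x y z
  proof -
    have "\<iota> z = rmeet A (\<iota> x) (\<iota> y)"
      using x y z embeddingD(3)[OF emb] by simp
    then show ?thesis
      using x y z pstruct_wfD(2)[OF wf, of x y z] proper_filterD(5)[OF MF, of "\<iota> x" "\<iota> y"] by simp
  qed
  show "z \<in> ?F \<longleftrightarrow> x \<notin> ?F" if x: "x \<in> pcarrier P" and z: "pneg P x = Some z" for x z
  proof -
    have "\<iota> z = rneg A (\<iota> x)"
      using x z embeddingD(4)[OF emb] by simp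
    then show ?thesis
      using x z pstruct_wfD(3)[OF wf, of x z] embeddingD(1)[OF emb] ultrafilter_neg_iff[OF M] by simp
  qed
qed

theorem lemma21:
  fixes P :: "'a pstruct" and A :: "'b rba" and \<iota> :: "'a \<Rightarrow> 'b"
  assumes "partial_rba_via P A \<iota>"
    and "a \<in> pcarrier P" and "b \<in> pcarrier P" and "\<not> ple P a b"
  shows "\<exists>F. prime_filter P F \<and> a \<in> F \<and> b \<notin> F"
proof -
  have wf: "pstruct_wf P" and emb: "embedding P A \<iota>" and "is_rba A"
    using assms(1) unfolding partial_rba_via_def by blast+
  then interpret residuated_boolean_algebra A
    by unfold_locales
  have "\<iota> a \<in> rcarrier A" and "\<iota> b \<in> rcarrier A" and "\<not> rle A (\<iota> a) (\<iota> b)"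
    using embeddingD(1,2)[OF emb] assms(2-4) by blast+
  then obtain M where M: "ultrafilter M" and "\<iota> a \<in> M" and "\<iota> b \<notin> M"
    by (rule ultrafilter_separates)
  show ?thesis
  proof (intro exI conjI)
    show "prime_filter P {x \<in> pcarrier P. \<iota> x \<in> M}"
      using wf emb M by (rule prime_filter_vimage_ultrafilter)
    show "a \<in> {x \<in> pcarrier P. \<iota> x \<in> M}" "b \<notin> {x \<in> pcarrier P. \<iota> x \<in> M}"
      using assms(2) \<open>\<iota> a \<in> M\<close> \<open>\<iota> b \<notin> M\<close> by simp_all
  qed
qed

end
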